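(* For every $n\ge1$ there is a formula $\Phi_n'\in\mathrm{LTL}[\mathsf{F}]$ such that $\Phi_n'\equiv\Phi_n$ (i.e. $\mathcal{L}(\Phi_n')=\mathcal{L}(\Phi_n)$) and $\mathrm{size}(\Phi_n')<2^{n+1}(n+2)^2$.
   Context: Fix $n\ge1$ and atomic propositions $AP=\{\tilde p,\tilde q\}\cup\{p_1,\dots,p_n\}\cup\{q_1,\dots,q_n\}$ (all distinct), $\Sigma=2^{AP}$. Formulae are built from literals $p,\neg p$ ($p\in AP$) with $\land,\lor$ and temporal operators $\mathsf{F}$ ("at some $j$ with $i\le j<|\sigma|$") and $\mathsf{O}$ ("at some $j$ with $0\le j\le i$"), interpreted on finite non-empty traces $\sigma\in\Sigma^+$ at positions $0\le i<|\sigma|$; $\mathcal{L}(\phi)=\{\sigma\in\Sigma^+:\sigma,0\models\phi\}$. $\mathrm{LTL}[\mathsf{F}]$ denotes formulae using only the temporal operator $\mathsf{F}$. Size: literals 1, unary operators add 1, $\mathrm{size}(\phi_1\circ\phi_2)=\mathrm{size}(\phi_1)+\mathrm{size}(\phi_2)+1$ for $\circ\in\{\land,\lor\}$. Define $\Phi_n := \mathsf{F}\big(\tilde q\land\bigwedge_{i=1}^n\big((q_i\land\mathsf{O}(\tilde p\land p_i))\lor(\neg q_i\land\mathsf{O}(\tilde p\land\neg p_i))\big)\big)$. *)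

theory Defs
  imports Main
begin

(* Atomic propositions: PT = p~, QT = q~, P i = p_i, Q i = q_i *)
datatype ap = PT | QT | P nat | Q nat

definition AP :: "nat \<Rightarrow> ap set" where
  "AP n = {PT, QT} \<union> P ` {1..n} \<union> Q ` {1..n}"

datatype form = Pos ap | Neg ap | And form form | Or form form | Fut form | Once form

fun sat :: "ap set list \<Rightarrow> nat \<Rightarrow> form \<Rightarrow> bool" where
  "sat \<sigma> i (Pos p) = (p \<in> \<sigma> ! i)"
| "sat \<sigma> i (Neg p) = (p \<notin> \<sigma> ! i)"
| "sat \<sigma> i (And a b) = (sat \<sigma> i a \<and> sat \<sigma> i b)"
| "sat \<sigma> i (Or a b) = (sat \<sigma> i a \<or> sat \<sigma> i b)"
| "sat \<sigma> i (Fut a) = (\<exists>j. i \<le> j \<and> j < length \<sigma> \<and> sat \<sigma> j a)"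
| "sat \<sigma> i (Once a) = (\<exists>j. j \<le> i \<and> sat \<sigma> j a)"

definition lang :: "nat \<Rightarrow> form \<Rightarrow> ap set list set" where
  "lang n \<phi> = {\<sigma>. \<sigma> \<noteq> [] \<and> set \<sigma> \<subseteq> Pow (AP n) \<and> sat \<sigma> 0 \<phi>}"

fun size_f :: "form \<Rightarrow> nat" where
  "size_f (Pos p) = 1"
| "size_f (Neg p) = 1"
| "size_f (And a b) = size_f a + size_f b + 1"
| "size_f (Or a b) = size_f a + size_f b + 1"
| "size_f (Fut a) = size_f a + 1"
| "size_f (Once a) = size_f a + 1"

fun atoms :: "form \<Rightarrow> ap set" where
  "atoms (Pos p) = {p}"
| "atoms (Neg p) = {p}"
| "atoms (And a b) = atoms a \<union> atoms b"
| "atoms (Or a b) = atoms a \<union> atoms b"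
| "atoms (Fut a) = atoms a"
| "atoms (Once a) = atoms a"

fun is_LTLF :: "form \<Rightarrow> bool" where
  "is_LTLF (Pos p) = True"
| "is_LTLF (Neg p) = True"
| "is_LTLF (And a b) = (is_LTLF a \<and> is_LTLF b)"
| "is_LTLF (Or a b) = (is_LTLF a \<and> is_LTLF b)"
| "is_LTLF (Fut a) = is_LTLF a"
| "is_LTLF (Once a) = False"

fun BigAnd :: "form list \<Rightarrow> form" where
  "BigAnd [] = Pos PT"  (* unused: the lists used are non-empty *)
| "BigAnd [x] = x"
| "BigAnd (x # y # xs) = And x (BigAnd (y # xs))"

definition Phi :: "nat \<Rightarrow> form" where
  "Phi n = Fut (And (Pos QT)
     (BigAnd (map (\<lambda>i. Or (And (Pos (Q i)) (Once (And (Pos PT) (Pos (P i)))))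
                              (And (Neg (Q i)) (Once (And (Pos PT) (Neg (P i)))))) [1..<n+1])))"

end

theory Submission
  imports Defs
begin

(* Without past operators we guess the set S of indices i with q_i true at j: for
   each of the 2^n guesses S, require for every i a p~-position with p_i as in S followed by a
   q~-position with the q's as in S.  The last such q~-position serves every i at once.  Each
   guess has size O(n^2), whence the bound 2^n O(n^2). *)

fun BigOr :: "form list \<Rightarrow> form" where
  "BigOr [] = Neg PT"
| "BigOr [x] = x"
| "BigOr (x # y # xs) = Or x (BigOr (y # xs))"

lemma sat_BigAnd: "xs \<noteq> [] \<Longrightarrow> sat s i (BigAnd xs) \<longleftrightarrow> (\<forall>x\<in>set xs. sat s i x)"
  by (induction xs rule: BigAnd.induct) auto

lemma sat_BigOr: "xs \<noteq> [] \<Longrightarrow> sat s i (BigOr xs) \<longleftrightarrow> (\<exists>x\<in>set xs. sat s i x)"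
  by (induction xs rule: BigOr.induct) auto

lemma size_BigAnd:
  "\<forall>x\<in>set xs. size_f x = c \<Longrightarrow> xs \<noteq> [] \<Longrightarrow> size_f (BigAnd xs) = length xs * (c + 1) - 1"
  by (induction xs rule: BigAnd.induct) auto

lemma size_BigOr:
  "\<forall>x\<in>set xs. size_f x = c \<Longrightarrow> xs \<noteq> [] \<Longrightarrow> size_f (BigOr xs) = length xs * (c + 1) - 1"
  by (induction xs rule: BigOr.induct) auto

lemma atoms_BigAnd [simp]: "xs \<noteq> [] \<Longrightarrow> atoms (BigAnd xs) = \<Union>(atoms ` set xs)"
  by (induction xs rule: BigAnd.induct) auto

lemma atoms_BigOr [simp]: "xs \<noteq> [] \<Longrightarrow> atoms (BigOr xs) = \<Union>(atoms ` set xs)"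
  by (induction xs rule: BigOr.induct) auto

lemma is_LTLF_BigAnd [simp]: "is_LTLF (BigAnd xs) \<longleftrightarrow> (\<forall>x\<in>set xs. is_LTLF x)"
  by (induction xs rule: BigAnd.induct) auto

lemma is_LTLF_BigOr [simp]: "is_LTLF (BigOr xs) \<longleftrightarrow> (\<forall>x\<in>set xs. is_LTLF x)"
  by (induction xs rule: BigOr.induct) auto

(* The last position satisfying b is a common witness for all conjuncts. *)
lemma sat_BigAnd_Fut_then_Fut:
  assumes "xs \<noteq> []"
  shows "sat s i (BigAnd (map (\<lambda>x. Fut (And (f x) (Fut b))) xs)) \<longleftrightarrow>
    (\<exists>j<length s. i \<le> j \<and> sat s j b \<and> (\<forall>x\<in>set xs. \<exists>k. i \<le> k \<and> k \<le> j \<and> sat s k (f x)))"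
    (is "?lhs \<longleftrightarrow> ?rhs")
proof
  assume ?lhs
  then have witness: "\<exists>k j. i \<le> k \<and> k \<le> j \<and> j < length s \<and> sat s k (f x) \<and> sat s j b"
    if "x \<in> set xs" for x
    using that assms by (force simp: sat_BigAnd)
  define J where "J = {j. j < length s \<and> sat s j b}"
  define m where "m = Max J"
  from assms obtain x0 where "x0 \<in> set xs" by fastforce
  with witness have "J \<noteq> {}" by (force simp: J_def)
  moreover have "finite J" by (simp add: J_def)
  ultimately have "m \<in> J" and below_m: "\<And>j. j \<in> J \<Longrightarrow> j \<le> m"
    by (simp_all add: m_def)
  have common: "\<exists>k. i \<le> k \<and> k \<le> m \<and> sat s k (f x)" if "x \<in> set xs" for x
  proof -
    from witness [OF that] obtain k j
      where "i \<le> k" "k \<le> j" "j < length s" "sat s k (f x)" "sat s j b"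
      by blast
    moreover from \<open>j < length s\<close> \<open>sat s j b\<close> have "j \<le> m"
      by (simp add: below_m J_def)
    ultimately show ?thesis by (meson le_trans)
  qed
  from common [OF \<open>x0 \<in> set xs\<close>] have "i \<le> m" by auto
  with \<open>m \<in> J\<close> common show ?rhs by (auto simp: J_def)
next
  assume ?rhs
  then show ?lhs using assms by (force simp: sat_BigAnd)
qed

definition lit :: "ap \<Rightarrow> bool \<Rightarrow> form" where
  "lit x b = (if b then Pos x else Neg x)"

lemma sat_lit [simp]: "sat s k (lit x b) \<longleftrightarrow> (x \<in> s ! k \<longleftrightarrow> b)"
  and size_lit [simp]: "size_f (lit x b) = 1"
  and atoms_lit [simp]: "atoms (lit x b) = {x}"
  and is_LTLF_lit [simp]: "is_LTLF (lit x b)"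
  by (simp_all add: lit_def)

definition q_point :: "nat \<Rightarrow> nat set \<Rightarrow> form" where
  "q_point n S = And (Pos QT) (BigAnd (map (\<lambda>i. lit (Q i) (i \<in> S)) [1..<n+1]))"

definition guess :: "nat \<Rightarrow> nat set \<Rightarrow> form" where
  "guess n S = BigAnd (map (\<lambda>i. Fut (And (And (Pos PT) (lit (P i) (i \<in> S))) (Fut (q_point n S))))
    [1..<n+1])"

lemma subseqs_not_Nil [simp]: "subseqs xs \<noteq> []"
  by (metis empty_iff empty_set subseqs_refl)

definition Phi_F :: "nat \<Rightarrow> form" where
  "Phi_F n = BigOr (map (\<lambda>is. guess n (set is)) (subseqs [1..<n+1]))"

lemma sat_q_point:
  "n \<ge> 1 \<Longrightarrow> sat s j (q_point n S) \<longleftrightarrow> QT \<in> s ! j \<and> (\<forall>i\<in>{1..n}. Q i \<in> s ! j \<longleftrightarrow> i \<in> S)"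
  by (auto simp: q_point_def sat_BigAnd simp del: upt_Suc)

lemma sat_guess:
  "n \<ge> 1 \<Longrightarrow> sat s 0 (guess n S) \<longleftrightarrow> (\<exists>j<length s. sat s j (q_point n S) \<and>
     (\<forall>i\<in>{1..n}. \<exists>k\<le>j. PT \<in> s ! k \<and> (P i \<in> s ! k \<longleftrightarrow> i \<in> S)))"
  unfolding guess_def by (subst sat_BigAnd_Fut_then_Fut) (auto simp del: upt_Suc)

lemma sat_Phi:
  assumes "n \<ge> 1"
  shows "sat s 0 (Phi n) \<longleftrightarrow> (\<exists>j<length s. QT \<in> s ! j \<and>
     (\<forall>i\<in>{1..n}. \<exists>k\<le>j. PT \<in> s ! k \<and> (P i \<in> s ! k \<longleftrightarrow> Q i \<in> s ! j)))"
    (is "_ \<longleftrightarrow> ?rhs")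
proof -
  have "sat s 0 (Phi n) \<longleftrightarrow> (\<exists>j<length s. QT \<in> s ! j \<and> (\<forall>i\<in>{1..n}.
      (Q i \<in> s ! j \<and> (\<exists>k\<le>j. PT \<in> s ! k \<and> P i \<in> s ! k)) \<or>
      (Q i \<notin> s ! j \<and> (\<exists>k\<le>j. PT \<in> s ! k \<and> P i \<notin> s ! k))))"
    using assms by (auto simp: Phi_def sat_BigAnd atLeastLessThanSuc_atLeastAtMost simp del: upt_Suc)
  also have "\<dots> \<longleftrightarrow> ?rhs" by blast
  finally show ?thesis .
qed

lemma sat_Phi_F_iff_sat_Phi:
  assumes "n \<ge> 1"
  shows "sat s 0 (Phi_F n) \<longleftrightarrow> sat s 0 (Phi n)"
proof -
  have "sat s 0 (Phi_F n) \<longleftrightarrow> (\<exists>S\<in>set ` set (subseqs [1..<n+1]). sat s 0 (guess n S))"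
    by (simp add: Phi_F_def sat_BigOr del: upt_Suc)
  also have "set ` set (subseqs [1..<n+1]) = Pow {1..n}"
    by (simp add: subseqs_powset atLeastLessThanSuc_atLeastAtMost del: upt_Suc)
  also have "(\<exists>S\<in>Pow {1..n}. sat s 0 (guess n S)) \<longleftrightarrow> sat s 0 (Phi n)"
  proof
    assume "\<exists>S\<in>Pow {1..n}. sat s 0 (guess n S)"
    then show "sat s 0 (Phi n)"
      using assms by (auto simp: sat_guess sat_q_point sat_Phi)
  next
    assume "sat s 0 (Phi n)"
    then obtain j where "j < length s" "QT \<in> s ! j"
      and "\<forall>i\<in>{1..n}. \<exists>k\<le>j. PT \<in> s ! k \<and> (P i \<in> s ! k \<longleftrightarrow> Q i \<in> s ! j)"
      using assms by (auto simp: sat_Phi)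
    then have "sat s 0 (guess n {i\<in>{1..n}. Q i \<in> s ! j})"
      using assms by (auto simp: sat_guess sat_q_point)
    then show "\<exists>S\<in>Pow {1..n}. sat s 0 (guess n S)" by blast
  qed
  finally show ?thesis .
qed

lemma size_q_point: "n \<ge> 1 \<Longrightarrow> size_f (q_point n S) = 2 * n + 1"
  by (simp add: q_point_def size_BigAnd [where c = 1] del: upt_Suc)

lemma size_guess: "n \<ge> 1 \<Longrightarrow> size_f (guess n S) = n * (2 * n + 8) - 1"
  unfolding guess_def by (subst size_BigAnd [where c = "2 * n + 7"]) (auto simp: size_q_point add.commute)

lemma size_Phi_F: "n \<ge> 1 \<Longrightarrow> size_f (Phi_F n) = 2 ^ n * (n * (2 * n + 8)) - 1"
  unfolding Phi_F_def
  by (subst size_BigOr [where c = "n * (2 * n + 8) - 1"])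
     (auto simp: size_guess length_subseqs simp del: upt_Suc)

lemma atoms_Phi_F: "n \<ge> 1 \<Longrightarrow> atoms (Phi_F n) \<subseteq> AP n"
  by (auto simp: Phi_F_def guess_def q_point_def AP_def simp del: upt_Suc)

lemma is_LTLF_Phi_F: "is_LTLF (Phi_F n)"
  by (simp add: Phi_F_def guess_def q_point_def)

theorem lemma1:
  fixes n :: nat
  assumes "n \<ge> 1"
  shows "\<exists>\<phi>. is_LTLF \<phi> \<and> atoms \<phi> \<subseteq> AP n \<and> lang n \<phi> = lang n (Phi n)
            \<and> size_f \<phi> < 2 ^ (n + 1) * (n + 2) ^ 2"
proof (intro exI conjI)
  show "is_LTLF (Phi_F n)" by (rule is_LTLF_Phi_F)
  show "atoms (Phi_F n) \<subseteq> AP n" using assms by (rule atoms_Phi_F)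
  show "lang n (Phi_F n) = lang n (Phi n)"
    using assms by (simp add: lang_def sat_Phi_F_iff_sat_Phi)
  have "size_f (Phi_F n) < 2 ^ n * (n * (2 * n + 8))"
    using assms by (simp add: size_Phi_F)
  also have "\<dots> \<le> 2 ^ n * (2 * (n + 2) ^ 2)"
    by (simp add: power2_eq_square algebra_simps)
  finally show "size_f (Phi_F n) < 2 ^ (n + 1) * (n + 2) ^ 2"
    by simp
qed

end
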